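(* In the general model described in the context: (i) For every $t\in\mathbb{R}$, $\mathbb{E}\,|\widehat{\mu}(t)|^2 \ge |\widehat{\nu}(t)|^2$. (ii) For every $\gamma\ge 0$ with $\lambda^{1+2\gamma}>\frac{1}{\ell}$ there exist constants $C_1,C_2$ (independent of the random labels) such that $$\mathbb{E}\Bigl(\int_{\mathbb{R}}|\widehat{\mu}(t)|^2|t|^{2\gamma}\,dt\Bigr)\le C_1+C_2\int_{\mathbb{R}}|\widehat{\nu}(t)|^2|t|^{2\gamma}\,dt .$$
   Context: General model. Let $\ell\ge 2$ and let $T=\{1,\dots,\ell\}^*$ be the set of finite words over $\{1,\dots,\ell\}$ (the rooted $\ell$-regular tree; the root is the empty word, $|v|$ is the length of $v$, and $v|j$ is the prefix of $v$ of length $j$). Let $D\subset\mathbb{R}$ be a finite set and $\eta=\sum_{d\in D}p_d\delta_d$ a probability measure on $D$. Let $\{a_v\}_{v\in T,\,|v|\ge 1}$ be i.i.d. random variables with law $\eta$. Fix $\lambda\in(0,1)$. For $v\in T$ with $|v|=n$ put $f(v)=\sum_{j=1}^n a_{v|j}\lambda^j$, and for an infinite word $\omega\in\{1,\dots,\ell\}^{\mathbb{N}}$ put $f(\omega)=\sum_{j\ge1}a_{\omega|j}\lambda^j$. The random probability measure $\mu$ (the branching random walk with steps of size $\lambda^n$) is the image under $f$ of the uniform product measure $(\frac1\ell,\dots,\frac1\ell)^{\mathbb{N}}$ on $\{1,\dots,\ell\}^{\mathbb{N}}$; equivalently, $\mu$ is the almost sure weak limit of $\mu_n=\ell^{-n}\sum_{|v|=n}\delta_{f(v)}$.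 Let $\nu$ be the deterministic law of $\sum_{n\ge1}b_n\lambda^n$, where $b_n$ are i.i.d. with law $\eta$ (equivalently, the unique probability measure with $\nu=\sum_{d\in D}p_d\,\nu\circ F_d^{-1}$, $F_d(x)=\lambda(x+d)$). Fourier transforms are $\widehat{\rho}(t)=\int e^{itx}\,d\rho(x)$; thus $\widehat{\nu}(t)=\prod_{n\ge1}\widehat{\eta}(t\lambda^n)$. $\mathbb{E}$ denotes expectation over the random labels $\{a_v\}$. *)

theory Defs
  imports "HOL-Probability.Probability"
begin

text \<open>Infinite words over {1..l} are functions w :: nat => nat (letter j is w j);
  the prefix of length j is the list map w [0..<j]. Finite words are nat lists.
  A labelling is a function a :: nat list => real (label a v of vertex v).\<close>

definition bfval :: "real \<Rightarrow> (nat list \<Rightarrow> real) \<Rightarrow> (nat \<Rightarrow> nat) \<Rightarrow> real" where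
  "bfval lam a w = (\<Sum>j. a (map w [0..<Suc j]) * lam ^ Suc j)"

definition word_measure :: "nat \<Rightarrow> (nat \<Rightarrow> nat) measure" where
  "word_measure l = PiM UNIV (\<lambda>_. measure_pmf (pmf_of_set {1..l}))"

definition bmu :: "nat \<Rightarrow> real \<Rightarrow> (nat list \<Rightarrow> real) \<Rightarrow> real measure" where
  "bmu l lam a = distr (word_measure l) borel (bfval lam a)"

definition label_space :: "real pmf \<Rightarrow> (nat list \<Rightarrow> real) measure" where
  "label_space eta = PiM UNIV (\<lambda>_. measure_pmf eta)"

text \<open>nu = law of sum_{n>=1} b_n lam^n, b_n i.i.d. with law eta (b_n stored as b (n-1))\<close>
definition bnu :: "real pmf \<Rightarrow> real \<Rightarrow> real measure" where
  "bnu eta lam = distr (PiM (UNIV :: nat set) (\<lambda>_. measure_pmf eta)) borel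
                   (\<lambda>b. \<Sum>n. b n * lam ^ Suc n)"

end

theory Submission
  imports Defs
begin

text \<open>
  Write \<open>f\<close> for the value of an infinite word and \<open>\<phi>\<^sub>\<rho>\<close> for the characteristic function
  of \<open>\<rho>\<close>. Squaring gives a double integral over pairs of words,
  \<open>|\<phi>\<^sub>\<mu>(t)|\<^sup>2 = \<integral>\<integral> cos (t (f \<omega> - f \<omega>'))\<close>. If \<open>\<omega>\<close> and \<open>\<omega>'\<close> first differ in letter \<open>k\<close>, then
  \<open>f \<omega> - f \<omega>' = \<lambda>\<^sup>k (X - Y)\<close>, where \<open>X\<close> and \<open>Y\<close> are the same series built from the labels of
  two disjoint subtrees, hence independent with law \<open>\<nu>\<close>; so the expected integrand is
  \<open>|\<phi>\<^sub>\<nu>(t \<lambda>\<^sup>k)|\<^sup>2\<close>. Such pairs have probability at most \<open>l\<^sup>-\<^sup>k\<close> and the diagonal is null,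
  hence \<open>E |\<phi>\<^sub>\<mu>(t)|\<^sup>2 \<le> \<Sum>\<^sub>k l\<^sup>-\<^sup>k |\<phi>\<^sub>\<nu>(t \<lambda>\<^sup>k)|\<^sup>2\<close>. Integrating against \<open>|t|\<^sup>2\<^sup>\<gamma>\<close> and substituting
  \<open>s = t \<lambda>\<^sup>k\<close> turns the \<open>k\<close>-th term into \<open>(l \<lambda>\<^sup>1\<^sup>+\<^sup>2\<^sup>\<gamma>)\<^sup>-\<^sup>k \<integral> |\<phi>\<^sub>\<nu>(s)|\<^sup>2 |s|\<^sup>2\<^sup>\<gamma> ds\<close>, a geometric
  series. For part (i), \<open>f \<omega>\<close> has law \<open>\<nu>\<close> for every fixed word, so \<open>E \<phi>\<^sub>\<mu>(t) = \<phi>\<^sub>\<nu>(t)\<close>, and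
  Jensen's inequality applies.
\<close>


lemma pair_prob_spaceI: "prob_space M1 \<Longrightarrow> prob_space M2 \<Longrightarrow> pair_prob_space M1 M2"
  by (simp add: pair_prob_space_def pair_sigma_finite_def prob_space_imp_sigma_finite)

lemma (in prob_space) square_expectation_le:
  fixes f :: "'a \<Rightarrow> real"
  assumes "integrable M f" "integrable M (\<lambda>x. (f x)\<^sup>2)"
  shows "(expectation f)\<^sup>2 \<le> expectation (\<lambda>x. (f x)\<^sup>2)"
  using variance_positive[of f] variance_eq[OF assms] by simp

lemma (in real_distribution) char_eq_Complex:
  "char M t = Complex (\<integral>x. cos (t * x) \<partial>M) (\<integral>x. sin (t * x) \<partial>M)"
proof -
  have int: "complex_integrable M (\<lambda>x. iexp (t * x))"
    by (rule integrable_iexp) auto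
  show ?thesis
    unfolding char_def complex_eq_iff
    using integral_Re[OF int] integral_Im[OF int] by (simp add: Re_exp Im_exp)
qed

lemma (in real_distribution) cmod_char_sq_eq_integral_cos_diff:
  "(cmod (char M t))\<^sup>2 = (\<integral>p. cos (t * (fst p - snd p)) \<partial>(M \<Otimes>\<^sub>M M))"
proof -
  interpret pair_prob_space M M ..
  have bounded: "integrable (M \<Otimes>\<^sub>M M) (\<lambda>(x, y). g (t * x) * g (t * y))"
    if "g \<in> borel_measurable borel" "\<And>x. \<bar>g x\<bar> \<le> 1" for g :: "real \<Rightarrow> real"
    using that by (intro integrable_const_bound[where B=1])
      (auto simp: split_beta abs_mult intro!: AE_I2 mult_le_one)
  have "(\<integral>p. cos (t * (fst p - snd p)) \<partial>(M \<Otimes>\<^sub>M M))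
      = (\<integral>(x, y). cos (t * x) * cos (t * y) \<partial>(M \<Otimes>\<^sub>M M))
        + (\<integral>(x, y). sin (t * x) * sin (t * y) \<partial>(M \<Otimes>\<^sub>M M))"
    by (subst Bochner_Integration.integral_add[symmetric, OF bounded bounded])
       (auto simp: split_beta right_diff_distrib cos_diff intro!: integral_cong)
  also have "\<dots> = (\<integral>x. cos (t * x) \<partial>M)\<^sup>2 + (\<integral>x. sin (t * x) \<partial>M)\<^sup>2"
    by (simp add: integral_fst'[OF bounded, symmetric] power2_eq_square)
  finally show ?thesis
    by (simp add: char_eq_Complex cmod_power2)
qed

section \<open>Tree sums and their laws\<close>

definition lam_expansion :: "real \<Rightarrow> (nat \<Rightarrow> real) \<Rightarrow> real" where
  "lam_expansion lam b = (\<Sum>n. b n * lam ^ Suc n)"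

lemma bnu_eq_distr_lam_expansion:
  "bnu eta lam = distr (PiM UNIV (\<lambda>_. measure_pmf eta)) borel (lam_expansion lam)"
  unfolding bnu_def lam_expansion_def ..

lemma bfval_eq_lam_expansion: "bfval lam a w = lam_expansion lam (\<lambda>j. a (map w [0..<Suc j]))"
  unfolding bfval_def lam_expansion_def ..

lemma measurable_pmf_component [measurable]:
  "(\<lambda>b. b i) \<in> borel_measurable (PiM UNIV (\<lambda>_. measure_pmf (p :: real pmf)))"
proof -
  have "(\<lambda>x. x) \<in> borel_measurable (measure_pmf p)"
    by (simp add: measurable_cong_sets[OF sets_measure_pmf_count_space refl])
  from measurable_compose[OF measurable_component_singleton[of i UNIV] this] show ?thesis
    by simp
qed

lemma measurable_lam_expansion [measurable]:
  "lam_expansion lam \<in> borel_measurable (PiM UNIV (\<lambda>_. measure_pmf (p :: real pmf)))"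
  unfolding lam_expansion_def by measurable

lemma measurable_prefix [measurable]:
  "(\<lambda>w. map w [0..<n]) \<in> measurable (PiM UNIV (\<lambda>_. measure_pmf (p :: nat pmf))) (count_space UNIV)"
proof (induction n)
  case (Suc n)
  have "(\<lambda>w. (\<lambda>xs w. xs @ [w n]) (map w [0..<n]) w)
      \<in> measurable (PiM UNIV (\<lambda>_. measure_pmf p)) (count_space UNIV)"
    by (rule measurable_compose_countable[OF _ Suc]) measurable
  then show ?case by simp
qed simp

lemma measurable_bfval:
  "(\<lambda>(a, w). bfval lam a w) \<in> borel_measurable (label_space eta \<Otimes>\<^sub>M word_measure l)"
  unfolding bfval_def label_space_def word_measure_def split_beta'
proof (rule borel_measurable_suminf)
  fix j
  show "(\<lambda>x. fst x (map (snd x) [0..<Suc j]) * lam ^ Suc j) \<in> borel_measurable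
        (PiM UNIV (\<lambda>_. measure_pmf eta) \<Otimes>\<^sub>M PiM UNIV (\<lambda>_. measure_pmf (pmf_of_set {1..l})))"
    by (intro borel_measurable_times
        measurable_compose_countable[where f="\<lambda>v x. fst x v" and g="\<lambda>x. map (snd x) [0..<Suc j]"])
      measurable
qed

lemma measurable_bfval_compose [measurable]:
  assumes "A \<in> measurable N (label_space eta)" "W \<in> measurable N (word_measure l)"
  shows "(\<lambda>x. bfval lam (A x) (W x)) \<in> borel_measurable N"
  using measurable_compose[OF measurable_Pair[OF assms] measurable_bfval] by simp

lemma space_word_measure [simp]: "space (word_measure l) = UNIV"
  by (simp add: word_measure_def space_PiM)

lemma measurable_bfval_word [measurable]: "bfval lam a \<in> borel_measurable (word_measure l)"
  using measurable_bfval_compose[OF measurable_const[of a] measurable_ident]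
  by (simp add: label_space_def space_PiM)

lemma measurable_bfval_label [measurable]: "(\<lambda>a. bfval lam a w) \<in> borel_measurable (label_space eta)"
  using measurable_bfval_compose[OF measurable_ident measurable_const[of w]] by simp

lemma prob_space_label_space: "prob_space (label_space eta)"
  unfolding label_space_def by (intro prob_space_PiM prob_space_measure_pmf)

lemma prob_space_word_measure: "prob_space (word_measure l)"
  unfolding word_measure_def by (intro prob_space_PiM prob_space_measure_pmf)

lemma real_distribution_bnu: "real_distribution (bnu eta lam)"
  unfolding real_distribution_def real_distribution_axioms_def bnu_eq_distr_lam_expansion
  by (auto intro!: prob_space.prob_space_distr prob_space_PiM prob_space_measure_pmf)

lemma real_distribution_bmu: "real_distribution (bmu l lam a)"
  unfolding real_distribution_def real_distribution_axioms_def bmu_def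
  by (auto intro!: prob_space.prob_space_distr prob_space_word_measure)

section \<open>Sums along disjoint paths\<close>

lemma measurable_label_path [measurable]:
  "(\<lambda>a n. a (P n)) \<in> measurable (label_space eta) (PiM (UNIV :: nat set) (\<lambda>_. measure_pmf eta))"
  unfolding label_space_def by (rule measurable_PiM_single') (auto simp: space_PiM)

lemma distr_label_path:
  assumes "inj P"
  shows "distr (label_space eta) borel (\<lambda>a. lam_expansion lam (\<lambda>n. a (P n))) = bnu eta lam"
proof -
  have "distr (label_space eta) borel (\<lambda>a. lam_expansion lam (\<lambda>n. a (P n)))
      = distr (distr (label_space eta) (PiM UNIV (\<lambda>_. measure_pmf eta)) (\<lambda>a n. a (P n)))
          borel (lam_expansion lam)"
    by (subst distr_distr) (auto simp: comp_def)
  also have "distr (label_space eta) (PiM UNIV (\<lambda>_. measure_pmf eta)) (\<lambda>a n. a (P n))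
      = PiM UNIV (\<lambda>_. measure_pmf eta)"
    using distr_PiM_reindex[of UNIV "\<lambda>_. measure_pmf eta" P UNIV] assms
    unfolding label_space_def by (simp add: restrict_def prob_space_measure_pmf)
  finally show ?thesis
    unfolding bnu_eq_distr_lam_expansion .
qed

lemma indep_vars_labels:
  "prob_space.indep_vars (label_space eta) (\<lambda>_. measure_pmf eta) (\<lambda>v a. a v) UNIV"
proof -
  interpret prob_space "label_space eta" by (rule prob_space_label_space)
  have "distr (label_space eta) (measure_pmf eta) (\<lambda>a. a v) = measure_pmf eta" for v
    unfolding label_space_def by (rule distr_PiM_component) (auto simp: prob_space_measure_pmf)
  moreover have "distr (label_space eta) (label_space eta) (\<lambda>a. a) = label_space eta"
    by (rule distr_id2) simp
  ultimately show ?thesis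
    by (subst indep_vars_iff_distr_eq_PiM) (auto simp: label_space_def restrict_def)
qed

lemma indep_label_paths:
  assumes "range P \<inter> range Q = {}"
  shows "prob_space.indep_var (label_space eta)
    borel (\<lambda>a. lam_expansion lam (\<lambda>n. a (P n))) borel (\<lambda>a. lam_expansion lam (\<lambda>n. a (Q n)))"
proof -
  interpret prob_space "label_space eta" by (rule prob_space_label_space)
  have measurable_on_range: "(\<lambda>r. lam_expansion lam (\<lambda>n. r (R n)))
      \<in> borel_measurable (PiM (range R) (\<lambda>_. measure_pmf eta))" for R :: "nat \<Rightarrow> nat list"
    by (rule measurable_compose[OF measurable_PiM_single' measurable_lam_expansion])
      (auto simp: space_PiM)
  from indep_var_compose[OF indep_var_restrict[OF indep_vars_labels assms]
      measurable_on_range measurable_on_range]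
  show ?thesis by (simp add: comp_def)
qed

lemma integral_cos_diff_label_paths:
  assumes "inj P" "inj Q" "range P \<inter> range Q = {}"
  shows "(\<integral>a. cos (c * (lam_expansion lam (\<lambda>n. a (P n)) - lam_expansion lam (\<lambda>n. a (Q n))))
      \<partial>label_space eta) = (cmod (char (bnu eta lam) c))\<^sup>2"
proof -
  interpret prob_space "label_space eta" by (rule prob_space_label_space)
  let ?X = "\<lambda>a. lam_expansion lam (\<lambda>n. a (P n))" and ?Y = "\<lambda>a. lam_expansion lam (\<lambda>n. a (Q n))"
  have joint: "distr (label_space eta) (borel \<Otimes>\<^sub>M borel) (\<lambda>a. (?X a, ?Y a))
      = bnu eta lam \<Otimes>\<^sub>M bnu eta lam"
    using indep_label_paths[OF assms(3), of eta lam]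
    by (simp add: indep_var_distribution_eq distr_label_path assms(1,2))
  have "(\<integral>a. cos (c * (?X a - ?Y a)) \<partial>label_space eta)
      = (\<integral>p. cos (c * (fst p - snd p)) \<partial>distr (label_space eta) (borel \<Otimes>\<^sub>M borel) (\<lambda>a. (?X a, ?Y a)))"
    by (subst integral_distr) auto
  then show ?thesis
    unfolding joint real_distribution.cmod_char_sq_eq_integral_cos_diff[OF real_distribution_bnu] .
qed

lemma summable_lam_expansion:
  fixes b :: "nat \<Rightarrow> real"
  assumes "\<And>n. \<bar>b n\<bar> \<le> B" "\<bar>lam\<bar> < 1"
  shows "summable (\<lambda>n. b n * lam ^ Suc n)"
proof (rule summable_comparison_test)
  show "\<exists>N. \<forall>n\<ge>N. norm (b n * lam ^ Suc n) \<le> B * \<bar>lam\<bar> ^ Suc n"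
    using assms by (auto simp: abs_mult power_abs intro!: mult_right_mono)
  show "summable (\<lambda>n. B * \<bar>lam\<bar> ^ Suc n)"
    using assms(2) by (intro summable_mult) (simp add: summable_geometric)
qed

lemma bfval_split:
  assumes "\<And>v. \<bar>a v\<bar> \<le> B" "\<bar>lam\<bar> < 1"
  shows "bfval lam a w = (\<Sum>i<k. a (map w [0..<Suc i]) * lam ^ Suc i)
    + lam ^ k * lam_expansion lam (\<lambda>n. a (map w [0..<Suc (n + k)]))"
proof -
  let ?T = "\<lambda>j. a (map w [0..<Suc j]) * lam ^ Suc j"
  have "bfval lam a w = (\<Sum>n. ?T (n + k)) + (\<Sum>i<k. ?T i)"
    unfolding bfval_def by (rule suminf_split_initial_segment[OF summable_lam_expansion[OF assms]])
  also have "(\<Sum>n. ?T (n + k)) = (\<Sum>n. a (map w [0..<Suc (n + k)]) * lam ^ Suc n) * lam ^ k"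
    by (subst suminf_mult2[OF summable_lam_expansion[OF assms]]) (simp add: power_add mult_ac)
  finally show ?thesis
    unfolding lam_expansion_def by (simp add: mult_ac)
qed

lemma AE_labels_in_support: "AE a in label_space eta. \<forall>v. a v \<in> set_pmf eta"
  unfolding label_space_def AE_all_countable
  by (intro allI AE_PiM_component) (auto simp: prob_space_measure_pmf AE_measure_pmf)

lemma inj_prefixes: "inj (\<lambda>n. map w [0..<Suc (n + k)])"
  by (rule injI) (drule arg_cong[where f=length], simp)

lemma bfval_diff_eq_after_common_prefix:
  assumes "\<And>v. \<bar>a v\<bar> \<le> B" "\<bar>lam\<bar> < 1" and agree: "\<forall>i<k. w i = w' i"
  shows "bfval lam a w - bfval lam a w' = lam ^ k *
    (lam_expansion lam (\<lambda>n. a (map w [0..<Suc (n + k)]))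
      - lam_expansion lam (\<lambda>n. a (map w' [0..<Suc (n + k)])))"
proof -
  have prefix: "(\<Sum>i<k. a (map w [0..<Suc i]) * lam ^ Suc i) = (\<Sum>i<k. a (map w' [0..<Suc i]) * lam ^ Suc i)"
    using agree by (intro sum.cong refl arg_cong2[where f="(*)"] arg_cong[where f=a] map_cong) auto
  show ?thesis
    unfolding bfval_split[OF assms(1,2), where k=k] prefix by (simp add: right_diff_distrib)
qed

lemma disjoint_prefix_paths:
  assumes "w k \<noteq> w' k"
  shows "range (\<lambda>n. map w [0..<Suc (n + k)]) \<inter> range (\<lambda>n. map w' [0..<Suc (n + k)]) = {}"
proof safe
  fix n m assume "map w [0..<Suc (n + k)] = map w' [0..<Suc (m + k)]"
  then have "map w [0..<Suc (n + k)] ! k = map w' [0..<Suc (m + k)] ! k"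
    by simp
  with assms show "map w [0..<Suc (n + k)] \<in> {}"
    by (simp del: upt_Suc add: nth_map_upt)
qed

lemma integral_cos_bfval_diff:
  assumes agree: "\<forall>i<k. w i = w' i" and differ: "w k \<noteq> w' k"
    and lam: "0 < lam" "lam < 1" and fin: "finite (set_pmf eta)"
  shows "(\<integral>a. cos (t * (bfval lam a w - bfval lam a w')) \<partial>label_space eta)
    = (cmod (char (bnu eta lam) (t * lam ^ k)))\<^sup>2"
proof -
  let ?X = "\<lambda>a. lam_expansion lam (\<lambda>n. a (map w [0..<Suc (n + k)]))"
  let ?Y = "\<lambda>a. lam_expansion lam (\<lambda>n. a (map w' [0..<Suc (n + k)]))"
  \<comment> \<open>Almost surely all labels lie in the finite support, so the series converge and can be split.\<close>
  have "AE a in label_space eta. cos (t * (bfval lam a w - bfval lam a w'))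
      = cos ((t * lam ^ k) * (?X a - ?Y a))"
    using AE_labels_in_support
  proof eventually_elim
    case (elim a)
    then have "\<bar>a v\<bar> \<le> Max (abs ` set_pmf eta)" for v
      using fin by simp
    from bfval_diff_eq_after_common_prefix[OF this _ agree] lam show ?case
      by (simp add: mult.assoc)
  qed
  then have "(\<integral>a. cos (t * (bfval lam a w - bfval lam a w')) \<partial>label_space eta)
      = (\<integral>a. cos ((t * lam ^ k) * (?X a - ?Y a)) \<partial>label_space eta)"
    by (rule integral_cong_AE[rotated 2]) auto
  also have "\<dots> = (cmod (char (bnu eta lam) (t * lam ^ k)))\<^sup>2"
    using differ by (intro integral_cos_diff_label_paths inj_prefixes disjoint_prefix_paths)
  finally show ?thesis .
qed

lemma char_bmu: "char (bmu l lam a) t = (CLINT w|word_measure l. iexp (t * bfval lam a w))"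
  unfolding char_def bmu_def by (subst integral_distr) auto

lemma measurable_char_bmu [measurable]:
  assumes [measurable]: "A \<in> measurable N (label_space eta)" "T \<in> borel_measurable N"
  shows "(\<lambda>x. char (bmu l lam (A x)) (T x)) \<in> borel_measurable N"
  unfolding char_bmu
  by (rule sigma_finite_measure.borel_measurable_lebesgue_integral
      [OF prob_space_imp_sigma_finite[OF prob_space_word_measure]]) measurable

lemma cmod_char_bmu_sq:
  "(cmod (char (bmu l lam a) t))\<^sup>2
    = (\<integral>p. cos (t * (bfval lam a (fst p) - bfval lam a (snd p))) \<partial>(word_measure l \<Otimes>\<^sub>M word_measure l))"
proof -
  have "bmu l lam a \<Otimes>\<^sub>M bmu l lam a = distr (word_measure l \<Otimes>\<^sub>M word_measure l) (borel \<Otimes>\<^sub>M borel)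
      (\<lambda>(w, w'). (bfval lam a w, bfval lam a w'))"
    unfolding bmu_def
    by (intro pair_measure_distr prob_space_imp_sigma_finite measurable_bfval_word
        prob_space.prob_space_distr[OF prob_space_word_measure])
  then show ?thesis
    using real_distribution.cmod_char_sq_eq_integral_cos_diff[OF real_distribution_bmu]
    by (simp add: integral_distr split_beta')
qed

lemma integral_cmod_char_bmu_sq:
  "(\<integral>a. (cmod (char (bmu l lam a) t))\<^sup>2 \<partial>label_space eta)
    = (\<integral>p. (\<integral>a. cos (t * (bfval lam a (fst p) - bfval lam a (snd p))) \<partial>label_space eta)
        \<partial>(word_measure l \<Otimes>\<^sub>M word_measure l))"
proof -
  interpret WW: prob_space "word_measure l \<Otimes>\<^sub>M word_measure l"
    by (intro prob_space_pair prob_space_word_measure)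
  interpret pair_prob_space "word_measure l \<Otimes>\<^sub>M word_measure l" "label_space eta"
    by (intro pair_prob_spaceI prob_space_label_space WW.prob_space_axioms)
  show ?thesis
    unfolding cmod_char_bmu_sq
    by (rule Fubini_integral, rule integrable_const_bound[where B=1]) auto
qed

lemma integral_char_bmu: "(CLINT a|label_space eta. char (bmu l lam a) t) = char (bnu eta lam) t"
proof -
  interpret pair_prob_space "word_measure l" "label_space eta"
    by (intro pair_prob_spaceI prob_space_label_space prob_space_word_measure)
  have char_law: "(CLINT a|label_space eta. iexp (t * bfval lam a w)) = char (bnu eta lam) t" for w
  proof -
    have "distr (label_space eta) borel (\<lambda>a. bfval lam a w) = bnu eta lam"
      unfolding bfval_eq_lam_expansion using distr_label_path[OF inj_prefixes[of w 0]] by simp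
    moreover have "char (distr (label_space eta) borel (\<lambda>a. bfval lam a w)) t
        = (CLINT a|label_space eta. iexp (t * bfval lam a w))"
      unfolding char_def by (subst integral_distr) auto
    ultimately show ?thesis by simp
  qed
  have "(CLINT a|label_space eta. char (bmu l lam a) t)
      = (CLINT w|word_measure l. CLINT a|label_space eta. iexp (t * bfval lam a w))"
    unfolding char_bmu
    by (rule Fubini_integral, rule integrable_const_bound[where B=1])
       (auto simp: norm_exp_i_times[of "t * x" for x, simplified])
  also have "\<dots> = (CLINT w|word_measure l. char (bnu eta lam) t)"
    by (simp only: char_law)
  finally show ?thesis by (simp add: M1.prob_space[simplified])
qed

lemma cmod_char_bnu_sq_le:
  "(cmod (char (bnu eta lam) t))\<^sup>2 \<le> (\<integral>a. (cmod (char (bmu l lam a) t))\<^sup>2 \<partial>label_space eta)"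
proof -
  interpret prob_space "label_space eta" by (rule prob_space_label_space)
  have bounded: "cmod (char (bmu l lam a) t) \<le> 1" for a
    by (rule real_distribution.cmod_char_le_1[OF real_distribution_bmu])
  have integrable: "integrable (label_space eta) (\<lambda>a. cmod (char (bmu l lam a) t) ^ n)" for n
    using bounded by (intro integrable_const_bound[where B=1]) (auto simp: power_le_one)
  have "cmod (char (bnu eta lam) t) \<le> (\<integral>a. cmod (char (bmu l lam a) t) \<partial>label_space eta)"
    unfolding integral_char_bmu[symmetric, where l=l] by (rule integral_norm_bound)
  then have "(cmod (char (bnu eta lam) t))\<^sup>2 \<le> (\<integral>a. cmod (char (bmu l lam a) t) \<partial>label_space eta)\<^sup>2"
    by (simp add: power_mono)
  also have "\<dots> \<le> (\<integral>a. (cmod (char (bmu l lam a) t))\<^sup>2 \<partial>label_space eta)"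
    using square_expectation_le integrable[of 1] integrable[of 2] by simp
  finally show ?thesis .
qed

section \<open>Pairs of words\<close>

definition agree_below :: "nat \<Rightarrow> ((nat \<Rightarrow> nat) \<times> (nat \<Rightarrow> nat)) set" where
  "agree_below k = {p. \<forall>i<k. fst p i = snd p i}"

lemma integral_cos_bfval_diff_first_difference:
  assumes "w \<noteq> w'" and lam: "0 < lam" "lam < 1" and fin: "finite (set_pmf eta)"
  obtains k where "(w, w') \<in> agree_below k"
    and "(\<integral>a. cos (t * (bfval lam a w - bfval lam a w')) \<partial>label_space eta)
      = (cmod (char (bnu eta lam) (t * lam ^ k)))\<^sup>2"
proof -
  obtain k where agree: "\<forall>i<k. w i = w' i" and differ: "w k \<noteq> w' k"
    using assms(1) exists_least_iff[of "\<lambda>i. w i \<noteq> w' i"] by (auto simp: fun_eq_iff)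
  with integral_cos_bfval_diff[OF agree differ lam fin] show ?thesis
    by (intro that) (simp_all add: agree_below_def)
qed

lemma sets_agree_below [measurable]:
  "agree_below k \<in> sets (word_measure l \<Otimes>\<^sub>M word_measure l)"
proof -
  let ?WW = "word_measure l \<Otimes>\<^sub>M word_measure l"
  have letter: "(\<lambda>w. w i) \<in> measurable (word_measure l) (count_space UNIV)" for i
    unfolding word_measure_def by measurable
  have [measurable]: "(\<lambda>w. real (w i)) \<in> borel_measurable (word_measure l)" for i
    by (rule measurable_compose[OF letter]) simp
  have "{p \<in> space ?WW. real (fst p i) = real (snd p i)} \<in> sets ?WW" for i
    by measurable
  then have "(\<Inter>i\<in>{..<k}. {p \<in> space ?WW. real (fst p i) = real (snd p i)}) \<in> sets ?WW"
    using sets.top[of ?WW] by (intro sets.countable_INT'') (auto simp: space_pair_measure)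
  moreover have "agree_below k = (\<Inter>i\<in>{..<k}. {p \<in> space ?WW. real (fst p i) = real (snd p i)})"
    by (auto simp: agree_below_def space_pair_measure)
  ultimately show ?thesis by simp
qed

lemma emeasure_words_with_prefix_le:
  assumes "l \<ge> 1"
  shows "emeasure (word_measure l) {w'. \<forall>i<k. w' i = w i} \<le> ennreal ((1 / real l) ^ k)"
proof -
  let ?U = "measure_pmf (pmf_of_set {1..l})"
  have "{w'. \<forall>i<k. w' i = w i} = prod_emb UNIV (\<lambda>_. ?U) {..<k} (PiE {..<k} (\<lambda>i. {w i}))"
    by (simp add: prod_emb_def space_PiM restrict_PiE_iff set_eq_iff Pi_iff Ball_def)
  then have "emeasure (word_measure l) {w'. \<forall>i<k. w' i = w i} = (\<Prod>i<k. ennreal (pmf (pmf_of_set {1..l}) (w i)))"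
    unfolding word_measure_def
    by (simp add: emeasure_PiM_emb prob_space_measure_pmf emeasure_pmf_single)
  also have "\<dots> = ennreal (\<Prod>i<k. pmf (pmf_of_set {1..l}) (w i))"
    by (simp add: prod_ennreal)
  also have "\<dots> \<le> ennreal (\<Prod>i<k. 1 / real l)"
    using assms by (intro ennreal_leI prod_mono) (auto simp: indicator_def)
  finally show ?thesis by simp
qed

lemma emeasure_agree_below_le:
  assumes "l \<ge> 1"
  shows "emeasure (word_measure l \<Otimes>\<^sub>M word_measure l) (agree_below k) \<le> ennreal ((1 / real l) ^ k)"
proof -
  interpret W: prob_space "word_measure l" by (rule prob_space_word_measure)
  have "emeasure (word_measure l \<Otimes>\<^sub>M word_measure l) (agree_below k)
      = (\<integral>\<^sup>+w. emeasure (word_measure l) {w'. \<forall>i<k. w' i = w i} \<partial>word_measure l)"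
    by (subst W.emeasure_pair_measure_alt[OF sets_agree_below]) (simp add: agree_below_def eq_commute)
  also have "\<dots> \<le> (\<integral>\<^sup>+w. ennreal ((1 / real l) ^ k) \<partial>word_measure l)"
    using assms by (intro nn_integral_mono emeasure_words_with_prefix_le)
  finally show ?thesis by (simp add: W.emeasure_space_1[simplified])
qed

lemma AE_words_differ:
  assumes "l \<ge> 2"
  shows "AE p in word_measure l \<Otimes>\<^sub>M word_measure l. fst p \<noteq> snd p"
proof -
  let ?WW = "word_measure l \<Otimes>\<^sub>M word_measure l"
  interpret WW: prob_space ?WW by (intro prob_space_pair prob_space_word_measure)
  let ?N = "\<Inter>k. agree_below k"
  have bound: "WW.prob ?N \<le> (1 / real l) ^ k" for k
  proof -
    have "emeasure ?WW ?N \<le> emeasure ?WW (agree_below k)"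
      by (intro emeasure_mono) auto
    also have "\<dots> \<le> ennreal ((1 / real l) ^ k)"
      using assms by (intro emeasure_agree_below_le) auto
    finally show ?thesis
      by (simp add: WW.emeasure_eq_measure)
  qed
  have "(\<lambda>k. (1 / real l) ^ k) \<longlonglongrightarrow> 0"
    using assms by (intro LIMSEQ_power_zero) auto
  then have "WW.prob ?N \<le> 0"
    using bound by (intro LIMSEQ_le_const) auto
  then have "?N \<in> null_sets ?WW"
    by (simp add: WW.emeasure_eq_measure null_sets_def measure_le_0_iff)
  moreover have "{p \<in> space ?WW. \<not> fst p \<noteq> snd p} \<subseteq> ?N"
    by (auto simp: agree_below_def)
  ultimately show ?thesis by (rule AE_I')
qed

lemma integral_cmod_char_bmu_sq_le:
  assumes l: "l \<ge> 2" and lam: "0 < lam" "lam < 1" and fin: "finite (set_pmf eta)"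
  shows "ennreal (\<integral>a. (cmod (char (bmu l lam a) t))\<^sup>2 \<partial>label_space eta)
    \<le> (\<Sum>k. ennreal ((1 / real l) ^ k * (cmod (char (bnu eta lam) (t * lam ^ k)))\<^sup>2))"
proof -
  let ?WW = "word_measure l \<Otimes>\<^sub>M word_measure l"
  let ?h = "\<lambda>k. (cmod (char (bnu eta lam) (t * lam ^ k)))\<^sup>2"
  define F where "F p = (\<integral>a. cos (t * (bfval lam a (fst p) - bfval lam a (snd p))) \<partial>label_space eta)"
    for p
  interpret WW: prob_space ?WW
    by (intro prob_space_pair prob_space_word_measure)
  interpret pair_prob_space ?WW "label_space eta"
    by (intro pair_prob_spaceI prob_space_label_space WW.prob_space_axioms)
  have "integrable (?WW \<Otimes>\<^sub>M label_space eta)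
      (\<lambda>(p, a). cos (t * (bfval lam a (fst p) - bfval lam a (snd p))))"
    by (rule integrable_const_bound[where B=1]) auto
  from integrable_fst'[OF this] have integrable_F: "integrable ?WW F"
    unfolding F_def by simp
  have AE_F: "AE p in ?WW. 0 \<le> F p \<and> ennreal (F p) \<le> (\<Sum>k. ennreal (?h k) * indicator (agree_below k) p)"
    using AE_words_differ[OF l]
  proof eventually_elim
    case (elim p)
    then obtain k where "p \<in> agree_below k" "F p = ?h k"
      using integral_cos_bfval_diff_first_difference[OF _ lam fin, of "fst p" "snd p" t]
      by (auto simp: F_def)
    moreover have "ennreal (?h k) * indicator (agree_below k) p
        \<le> (\<Sum>k. ennreal (?h k) * indicator (agree_below k) p)"
      using ennreal_suminf_lessD[of "\<lambda>k. ennreal (?h k) * indicator (agree_below k) p" _ k]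
      by (meson not_le less_irrefl)
    ultimately show ?case by simp
  qed
  have "ennreal (\<integral>a. (cmod (char (bmu l lam a) t))\<^sup>2 \<partial>label_space eta) = ennreal (\<integral>p. F p \<partial>?WW)"
    by (simp add: F_def integral_cmod_char_bmu_sq)
  also have "\<dots> = (\<integral>\<^sup>+p. ennreal (F p) \<partial>?WW)"
    using AE_F by (intro nn_integral_eq_integral[symmetric] integrable_F) auto
  also have "\<dots> \<le> (\<integral>\<^sup>+p. (\<Sum>k. ennreal (?h k) * indicator (agree_below k) p) \<partial>?WW)"
    using AE_F by (intro nn_integral_mono_AE) auto
  also have "\<dots> = (\<Sum>k. ennreal (?h k) * emeasure ?WW (agree_below k))"
    by (simp add: nn_integral_suminf nn_integral_cmult_indicator)
  also have "\<dots> \<le> (\<Sum>k. ennreal (?h k) * ennreal ((1 / real l) ^ k))"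
    using l by (intro suminf_le summableI mult_left_mono emeasure_agree_below_le) auto
  finally show ?thesis
    by (simp add: ennreal_mult mult.commute)
qed

section \<open>Weighted Fourier energy\<close>

lemma nn_integral_dilation_weighted:
  fixes h :: "real \<Rightarrow> real" and c q :: real
  assumes [measurable]: "h \<in> borel_measurable borel" and c: "c > 0"
  shows "(\<integral>\<^sup>+x. ennreal (h (x * c) * \<bar>x\<bar> powr q) \<partial>lborel)
    = ennreal (1 / c powr (1 + q)) * (\<integral>\<^sup>+s. ennreal (h s * \<bar>s\<bar> powr q) \<partial>lborel)"
proof -
  let ?J = "\<integral>\<^sup>+x. ennreal (h (x * c) * \<bar>x\<bar> powr q) \<partial>lborel"
  have "(\<integral>\<^sup>+s. ennreal (h s * \<bar>s\<bar> powr q) \<partial>lborel)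
      = ennreal c * (\<integral>\<^sup>+x. ennreal (h (0 + c * x) * \<bar>0 + c * x\<bar> powr q) \<partial>lborel)"
    using c by (subst nn_integral_real_affine[where c=c and t=0]) auto
  also have "\<dots> = ennreal c * (\<integral>\<^sup>+x. ennreal (c powr q) * ennreal (h (x * c) * \<bar>x\<bar> powr q) \<partial>lborel)"
    using c by (intro arg_cong2[where f="(*)"] nn_integral_cong refl)
      (simp add: abs_mult powr_mult mult_ac flip: ennreal_mult')
  also have "\<dots> = ennreal (c powr (1 + q)) * ?J"
    using c by (simp add: nn_integral_cmult powr_add mult.assoc ennreal_mult)
  finally have "(\<integral>\<^sup>+s. ennreal (h s * \<bar>s\<bar> powr q) \<partial>lborel) = ennreal (c powr (1 + q)) * ?J" .
  moreover have "ennreal (1 / c powr (1 + q)) * ennreal (c powr (1 + q)) = 1"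
    using c by (simp flip: ennreal_mult)
  ultimately show ?thesis
    by (simp add: mult.assoc[symmetric])
qed

lemma suminf_nn_integral_dilations:
  fixes h :: "real \<Rightarrow> real" and l lam q :: real
  defines "L \<equiv> l * lam powr (1 + q)"
  assumes [measurable]: "h \<in> borel_measurable borel" and "l > 0" "lam > 0" "L > 1"
  shows "(\<Sum>k. ennreal ((1 / l) ^ k) * (\<integral>\<^sup>+t. ennreal (h (t * lam ^ k) * \<bar>t\<bar> powr q) \<partial>lborel))
    = ennreal (L / (L - 1)) * (\<integral>\<^sup>+s. ennreal (h s * \<bar>s\<bar> powr q) \<partial>lborel)"
proof -
  let ?X = "\<integral>\<^sup>+s. ennreal (h s * \<bar>s\<bar> powr q) \<partial>lborel"
  define r where "r = 1 / L"
  have r: "0 \<le> r" "r < 1"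
    using assms by (auto simp: r_def)
  have "ennreal ((1 / l) ^ k) * (\<integral>\<^sup>+t. ennreal (h (t * lam ^ k) * \<bar>t\<bar> powr q) \<partial>lborel)
      = ennreal (r ^ k) * ?X" for k
  proof -
    have "(1 / l) ^ k * (1 / (lam ^ k) powr (1 + q)) = r ^ k"
      using assms by (simp add: r_def L_def powr_realpow[symmetric] powr_powr power_divide
          power_mult_distrib powr_power mult.commute)
    then have factor: "ennreal ((1 / l) ^ k) * ennreal (1 / (lam ^ k) powr (1 + q)) = ennreal (r ^ k)"
      using assms by (simp add: ennreal_mult[symmetric])
    have "(\<integral>\<^sup>+t. ennreal (h (t * lam ^ k) * \<bar>t\<bar> powr q) \<partial>lborel)
        = ennreal (1 / (lam ^ k) powr (1 + q)) * ?X"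
      using assms by (intro nn_integral_dilation_weighted) auto
    then show ?thesis
      by (simp only: factor mult.assoc[symmetric])
  qed
  then have "(\<Sum>k. ennreal ((1 / l) ^ k) * (\<integral>\<^sup>+t. ennreal (h (t * lam ^ k) * \<bar>t\<bar> powr q) \<partial>lborel))
      = ennreal (\<Sum>k. r ^ k) * ?X"
    using r by (simp add: suminf_ennreal2 summable_geometric)
  also have "(\<Sum>k. r ^ k) = 1 / (1 - r)"
    using r by (intro suminf_geometric) auto
  also have "\<dots> = L / (L - 1)"
    using assms by (simp add: r_def field_simps)
  finally show ?thesis .
qed

lemma nn_integral_cmod_char_bmu_sq_mult:
  assumes "c \<ge> 0"
  shows "(\<integral>\<^sup>+a. ennreal ((cmod (char (bmu l lam a) t))\<^sup>2 * c) \<partial>label_space eta)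
    = ennreal (\<integral>a. (cmod (char (bmu l lam a) t))\<^sup>2 \<partial>label_space eta) * ennreal c"
proof -
  interpret prob_space "label_space eta" by (rule prob_space_label_space)
  have "integrable (label_space eta) (\<lambda>a. (cmod (char (bmu l lam a) t))\<^sup>2)"
    using real_distribution.cmod_char_le_1[OF real_distribution_bmu]
    by (intro integrable_const_bound[where B=1]) (auto simp: abs_le_square_iff power_le_one)
  then show ?thesis
    using assms by (simp add: ennreal_mult'' nn_integral_multc nn_integral_eq_integral)
qed

lemma nn_integral_weighted_cmod_char_bmu_sq_le:
  fixes l :: nat and lam q :: real
  defines "L \<equiv> real l * lam powr (1 + q)"
  assumes l: "l \<ge> 2" and lam: "0 < lam" "lam < 1" and fin: "finite (set_pmf eta)" and L: "L > 1"
  shows "(\<integral>\<^sup>+a. (\<integral>\<^sup>+t. ennreal ((cmod (char (bmu l lam a) t))\<^sup>2 * \<bar>t\<bar> powr q) \<partial>lborel) \<partial>label_space eta)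
    \<le> ennreal (L / (L - 1)) * (\<integral>\<^sup>+t. ennreal ((cmod (char (bnu eta lam) t))\<^sup>2 * \<bar>t\<bar> powr q) \<partial>lborel)"
proof -
  interpret pair_sigma_finite "label_space eta" lborel
    by (intro pair_sigma_finite.intro prob_space_imp_sigma_finite prob_space_label_space
        lborel.sigma_finite_measure_axioms)
  let ?E = "\<lambda>t. \<integral>a. (cmod (char (bmu l lam a) t))\<^sup>2 \<partial>label_space eta"
  let ?h = "\<lambda>k t. (cmod (char (bnu eta lam) (t * lam ^ k)))\<^sup>2"
  have [measurable]: "char (bnu eta lam) \<in> borel_measurable borel"
    by (rule real_distribution.char_measurable[OF real_distribution_bnu])
  have "(\<integral>\<^sup>+a. (\<integral>\<^sup>+t. ennreal ((cmod (char (bmu l lam a) t))\<^sup>2 * \<bar>t\<bar> powr q) \<partial>lborel) \<partial>label_space eta)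
      = (\<integral>\<^sup>+t. ennreal (?E t) * ennreal (\<bar>t\<bar> powr q) \<partial>lborel)"
    unfolding nn_integral_cmod_char_bmu_sq_mult[OF powr_ge_zero, symmetric]
    by (rule Fubini'[symmetric]) (simp add: split_beta')
  also have "\<dots> \<le> (\<integral>\<^sup>+t. (\<Sum>k. ennreal ((1 / real l) ^ k * ?h k t)) * ennreal (\<bar>t\<bar> powr q) \<partial>lborel)"
    using l lam fin by (intro nn_integral_mono mult_right_mono integral_cmod_char_bmu_sq_le) auto
  also have "\<dots> = (\<integral>\<^sup>+t. (\<Sum>k. ennreal ((1 / real l) ^ k) * ennreal (?h k t * \<bar>t\<bar> powr q)) \<partial>lborel)"
    by (intro nn_integral_cong)
      (simp add: ennreal_mult mult.assoc ennreal_suminf_multc[symmetric] del: ennreal_suminf_multc)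
  also have "\<dots> = (\<Sum>k. ennreal ((1 / real l) ^ k) * (\<integral>\<^sup>+t. ennreal (?h k t * \<bar>t\<bar> powr q) \<partial>lborel))"
    by (subst nn_integral_suminf) (auto intro!: suminf_cong nn_integral_cmult)
  also have "\<dots> = ennreal (L / (L - 1))
      * (\<integral>\<^sup>+t. ennreal ((cmod (char (bnu eta lam) t))\<^sup>2 * \<bar>t\<bar> powr q) \<partial>lborel)"
    using l lam L unfolding L_def by (intro suminf_nn_integral_dilations) auto
  finally show ?thesis .
qed

theorem theorem1p1:
  fixes l :: nat and lam :: real and eta :: "real pmf"
  assumes "l \<ge> 2" and "0 < lam" and "lam < 1" and "finite (set_pmf eta)"
  shows "(\<forall>t::real.
            (\<integral>a. (cmod (char (bmu l lam a) t))\<^sup>2 \<partial>label_space eta)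
              \<ge> (cmod (char (bnu eta lam) t))\<^sup>2)
       \<and> (\<forall>\<gamma>::real. \<gamma> \<ge> 0 \<and> lam powr (1 + 2 * \<gamma>) > 1 / real l \<longrightarrow>
            (\<exists>C1 C2 :: real.
               (\<integral>\<^sup>+ a. (\<integral>\<^sup>+ t. ennreal ((cmod (char (bmu l lam a) t))\<^sup>2 * \<bar>t\<bar> powr (2 * \<gamma>)) \<partial>lborel)
                   \<partial>label_space eta)
               \<le> ennreal C1 + ennreal C2 *
                  (\<integral>\<^sup>+ t. ennreal ((cmod (char (bnu eta lam) t))\<^sup>2 * \<bar>t\<bar> powr (2 * \<gamma>)) \<partial>lborel)))"
proof (intro conjI allI impI)
  fix t :: real
  show "(\<integral>a. (cmod (char (bmu l lam a) t))\<^sup>2 \<partial>label_space eta) \<ge> (cmod (char (bnu eta lam) t))\<^sup>2"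
    by (rule cmod_char_bnu_sq_le)
next
  fix \<gamma> :: real
  assume "\<gamma> \<ge> 0 \<and> lam powr (1 + 2 * \<gamma>) > 1 / real l"
  with assms(1) have L: "real l * lam powr (1 + 2 * \<gamma>) > 1"
    by (simp add: field_simps)
  let ?L = "real l * lam powr (1 + 2 * \<gamma>)"
  from nn_integral_weighted_cmod_char_bmu_sq_le[OF assms(1-4) L]
  show "\<exists>C1 C2 :: real.
      (\<integral>\<^sup>+ a. (\<integral>\<^sup>+ t. ennreal ((cmod (char (bmu l lam a) t))\<^sup>2 * \<bar>t\<bar> powr (2 * \<gamma>)) \<partial>lborel)
          \<partial>label_space eta)
      \<le> ennreal C1 + ennreal C2 *
         (\<integral>\<^sup>+ t. ennreal ((cmod (char (bnu eta lam) t))\<^sup>2 * \<bar>t\<bar> powr (2 * \<gamma>)) \<partial>lborel)"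
    by (intro exI[of _ 0] exI[of _ "?L / (?L - 1)"]) simp
qed

end
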